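(* Let $d\ge 1$ and let $\mathcal S:\mathbb C^d\to\mathcal H$ be a map into a real Hilbert space $\mathcal H$ satisfying: (i) $\mathcal S$ is real-linear: $\mathcal S(a|\phi\rangle+b|\psi\rangle)=a\,\mathcal S(|\phi\rangle)+b\,\mathcal S(|\psi\rangle)$ for all $|\phi\rangle,|\psi\rangle\in\mathbb C^d$, $a,b\in\mathbb R$; (ii) there is a real representation $g$ of $\mathrm{SO}(2)$ on $\mathcal H$ such that $\mathcal S(e^{i\alpha}|\psi\rangle)=g(R_\alpha)\,\mathcal S(|\psi\rangle)$ for all $|\psi\rangle$ and all $\alpha\in\mathbb R$, where $R_\alpha\in\mathrm{SO}(2)$ is the rotation by angle $\alpha$; (iii) if $\langle\phi|\psi\rangle=0$ then $\mathcal S(|\phi\rangle)^T\mathcal S(|\psi\rangle)=0$, and if $\langle\phi|\psi\rangle=1$ then $\mathcal S(|\phi\rangle)^T\mathcal S(|\psi\rangle)=1$; (iv) $\mathcal S$ is surjective onto $\mathcal H$. Then $\mathcal H\cong\mathbb R^d\otimes\mathbb R^2$ (as real Hilbert spaces), and there exist an orthonormal basis $\{|e_j\rangle\}_{j=1}^d$ of $\mathbb C^d$ and an orthonormal basis $\{|\tilde e_j\rangle\otimes|0\rangle_F,\ |\tilde e_j\rangle\otimes|1\rangle_F\}_{j=1}^d$ of $\mathcal H\cong\mathbb R^d\otimes\mathbb R^2$ such that for all $c_1,\dots,c_d\in\mathbb C$, $$\mathcal S\Big(\sum_{j=1}^d c_j|e_j\rangle\Big)=\sum_{j=1}^d\big[\mathrm{Re}(c_j)\,|\tilde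 e_j\rangle\otimes|0\rangle_F+\mathrm{Im}(c_j)\,|\tilde e_j\rangle\otimes|1\rangle_F\big].$$
   Context: $\{|0\rangle_F,|1\rangle_F\}$ denotes the standard orthonormal basis of the second factor $\mathbb R^2$ (the "flag"). For real vectors, $v^T w$ is the real inner product. *)

theory Defs
  imports "HOL-Analysis.Analysis"
begin

definition braket :: "complex ^ 'd \<Rightarrow> complex ^ 'd \<Rightarrow> complex" where
  "braket \<phi> \<psi> = (\<Sum>j\<in>UNIV. cnj (\<phi> $ j) * \<psi> $ j)"

definition complex_onb :: "('d::finite \<Rightarrow> complex ^ 'd) \<Rightarrow> bool" where
  "complex_onb e \<longleftrightarrow>
     (\<forall>i j. braket (e i) (e j) = (if i = j then 1 else 0)) \<and>
     (\<forall>\<psi>. \<exists>c. \<psi> = (\<Sum>j\<in>UNIV. c j *s e j))"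

definition real_onb :: "('i \<Rightarrow> 'a::real_inner) \<Rightarrow> bool" where
  "real_onb v \<longleftrightarrow>
     (\<forall>i j. inner (v i) (v j) = (if i = j then 1 else 0)) \<and> span (range v) = UNIV"

definition SO2 :: "(real ^ 2 ^ 2) set" where
  "SO2 = {R. orthogonal_matrix R \<and> det R = 1}"

definition rot :: "real \<Rightarrow> real ^ 2 ^ 2" where
  "rot \<alpha> = vector [vector [cos \<alpha>, - sin \<alpha>], vector [sin \<alpha>, cos \<alpha>]]"

definition SO2_rep :: "(real ^ 2 ^ 2 \<Rightarrow> 'h::real_vector \<Rightarrow> 'h) \<Rightarrow> bool" where
  "SO2_rep g \<longleftrightarrow>
     (\<forall>R\<in>SO2. linear (g R)) \<and> g (mat 1) = id \<and>
     (\<forall>R\<in>SO2. \<forall>Q\<in>SO2. g (R ** Q) = g R \<circ> g Q)"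

text \<open>R^d (x) R^2 modelled as real^2^'d (d x 2 real matrices, Frobenius inner product),
  with elementary tensors v (x) w.\<close>
definition tprod :: "real ^ 'd \<Rightarrow> real ^ 2 \<Rightarrow> real ^ 2 ^ 'd" where
  "tprod v w = (\<chi> i. \<chi> k. v $ i * w $ k)"

definition flag0 :: "real ^ 2" where "flag0 = axis 1 1"
definition flag1 :: "real ^ 2" where "flag1 = axis 2 1"

definition hilbert_iso :: "('a::real_inner \<Rightarrow> 'b::real_inner) \<Rightarrow> bool" where
  "hilbert_iso U \<longleftrightarrow> linear U \<and> bij U \<and> (\<forall>x y. inner (U x) (U y) = inner x y)"

end

theory Submission
  imports Defs
begin

text \<open>Pairing \<open>\<phi>\<close> with \<open>\<phi> / \<parallel>\<phi>\<parallel>\<^sup>2\<close> shows that the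
  real-linear map \<open>S\<close> preserves norms, hence (by polarization) the real inner product
  \<open>Re \<langle>\<phi>|\<psi>\<rangle>\<close>, which is the canonical inner product of \<open>\<complex>\<^sup>d\<close> viewed as a real space.
  Being surjective, \<open>S\<close> is therefore an isomorphism of real Hilbert spaces, and its inverse
  followed by splitting every coordinate into real and imaginary part identifies the target
  with \<open>\<real>\<^sup>d \<otimes> \<real>\<^sup>2\<close>, with both bases the standard ones.\<close>

lemma inner_vec_complex_eq_Re_braket: "inner \<phi> \<psi> = Re (braket \<phi> \<psi>)"
  by (simp add: inner_vec_def inner_complex_def braket_def Re_sum)

lemma braket_scaleR_right: "braket \<phi> (r *\<^sub>R \<psi>) = of_real r * braket \<phi> \<psi>"
  unfolding braket_def vector_scaleR_component
  by (simp add: sum_distrib_left scaleR_conv_of_real mult.left_commute)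

lemma braket_self_eq_norm_square: "braket \<phi> \<phi> = of_real ((norm \<phi>)\<^sup>2)"
proof (rule complex_eqI)
  show "Re (braket \<phi> \<phi>) = Re (of_real ((norm \<phi>)\<^sup>2))"
    by (simp add: power2_norm_eq_inner inner_vec_complex_eq_Re_braket)
  show "Im (braket \<phi> \<phi>) = Im (of_real ((norm \<phi>)\<^sup>2))"
    by (simp add: braket_def Im_sum)
qed

lemma linear_inv:
  assumes "linear f" "bij f"
  shows "linear (inv f)"
proof (rule linearI)
  have f_inv: "f (inv f x) = x" for x
    using assms(2) by (simp add: bij_is_surj surj_f_inv_f)
  show "inv f (x + y) = inv f x + inv f y" for x y
    using assms(2) f_inv linear_add[OF assms(1)] by (metis bij_inv_eq_iff)
  show "inv f (r *\<^sub>R x) = r *\<^sub>R inv f x" for r x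
    using assms(2) f_inv linear_scale[OF assms(1)] by (metis bij_inv_eq_iff)
qed

lemma hilbert_iso_iff_orthogonal_transformation:
  "hilbert_iso U \<longleftrightarrow> orthogonal_transformation U \<and> bij U"
  by (auto simp: hilbert_iso_def orthogonal_transformation_def)

lemma hilbert_iso_inv:
  assumes "hilbert_iso U"
  shows "hilbert_iso (inv U)"
proof -
  have lin: "linear U" and bij: "bij U" and inner: "\<And>x y. inner (U x) (U y) = inner x y"
    using assms by (auto simp: hilbert_iso_def)
  have "inner (inv U x) (inv U y) = inner x y" for x y
    using inner[of "inv U x" "inv U y"] bij by (simp add: bij_is_surj surj_f_inv_f)
  then show ?thesis
    using lin bij by (simp add: hilbert_iso_def linear_inv bij_imp_bij_inv)
qed

lemma hilbert_iso_comp: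
  "hilbert_iso U \<Longrightarrow> hilbert_iso V \<Longrightarrow> hilbert_iso (V \<circ> U)"
  by (simp add: hilbert_iso_iff_orthogonal_transformation orthogonal_transformation_compose
      bij_comp)

lemma norm_preserving_if_braket_one_imp_inner_one:
  fixes S :: "complex ^ 'd \<Rightarrow> 'h::real_inner"
  assumes "linear S"
    and one: "\<And>\<phi> \<psi>. braket \<phi> \<psi> = 1 \<Longrightarrow> inner (S \<phi>) (S \<psi>) = 1"
  shows "norm (S \<phi>) = norm \<phi>"
proof (cases "\<phi> = 0")
  case True
  then show ?thesis using linear_0[OF assms(1)] by simp
next
  case False
  define n where "n = (norm \<phi>)\<^sup>2"
  have "n > 0" using False by (simp add: n_def)
  have "braket \<phi> ((1 / n) *\<^sub>R \<phi>) = 1"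
    using \<open>n > 0\<close> by (simp add: braket_scaleR_right braket_self_eq_norm_square n_def)
  then have "inner (S \<phi>) (S ((1 / n) *\<^sub>R \<phi>)) = 1" by (rule one)
  then have "(norm (S \<phi>))\<^sup>2 = n"
    using \<open>n > 0\<close> by (simp add: linear_scale[OF assms(1)] power2_norm_eq_inner field_simps)
  then show ?thesis by (simp add: n_def)
qed

definition realify :: "complex ^ 'd \<Rightarrow> real ^ 2 ^ 'd" where
  "realify \<psi> = (\<chi> i k. if k = 1 then Re (\<psi> $ i) else Im (\<psi> $ i))"

lemma hilbert_iso_realify: "hilbert_iso realify"
  unfolding hilbert_iso_def
proof (intro conjI allI)
  show "linear realify"
    by (rule linearI) (auto simp: realify_def vec_eq_iff)
  have "realify (\<chi> i. Complex (y $ i $ 1) (y $ i $ 2)) = y" for y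
    by (simp add: realify_def vec_eq_iff forall_2)
  then have "surj realify" by (rule surjI)
  moreover have "inj realify"
  proof (rule injI)
    fix x y assume "realify x = realify y"
    then have "realify x $ i $ k = realify y $ i $ k" for i k by simp
    from this[of _ 1] this[of _ 2] show "x = y"
      by (simp add: realify_def vec_eq_iff complex_eq_iff)
  qed
  ultimately show "bij realify" by (simp add: bij_def)
  show "inner (realify x) (realify y) = inner x y" for x y
    by (simp add: realify_def inner_vec_def inner_complex_def UNIV_2)
qed

lemma realify_vec_lambda:
  "realify (\<chi> j. c j) =
     (\<Sum>j\<in>UNIV. Re (c j) *\<^sub>R tprod (axis j 1) flag0 + Im (c j) *\<^sub>R tprod (axis j 1) flag1)"
proof -
  have "(\<Sum>j\<in>UNIV. Re (c j) * (axis j 1 $ i * flag0 $ k) + Im (c j) * (axis j 1 $ i * flag1 $ k))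
      = realify (\<chi> j. c j) $ i $ k" for i k
  proof -
    have "(\<Sum>j\<in>UNIV. Re (c j) * (axis j 1 $ i * flag0 $ k) + Im (c j) * (axis j 1 $ i * flag1 $ k))
      = (\<Sum>j\<in>UNIV. if j = i then Re (c j) * flag0 $ k + Im (c j) * flag1 $ k else 0)"
      by (rule sum.cong) (auto simp: axis_def)
    then show ?thesis
      using exhaust_2[of k] by (auto simp: realify_def flag0_def flag1_def axis_def)
  qed
  then show ?thesis
    by (simp add: vec_eq_iff sum_component tprod_def)
qed

lemma complex_onb_axis: "complex_onb (\<lambda>j. axis j 1)"
  unfolding complex_onb_def
proof (intro conjI allI)
  fix i j :: "'d::finite"
  have "cnj (axis i 1 $ k) * axis j 1 $ k = (if k = i then (if i = j then 1 else 0) else 0)" for k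
    by (simp add: axis_def)
  then show "braket (axis i 1) (axis j 1) = (if i = j then 1 else 0)"
    by (simp add: braket_def)
next
  show "\<exists>c. \<psi> = (\<Sum>j\<in>UNIV. c j *s axis j 1)" for \<psi> :: "complex ^ 'd"
    by (rule exI[of _ "\<lambda>j. \<psi> $ j"]) (simp add: basis_expansion)
qed

lemma real_onb_axis: "real_onb (\<lambda>j. axis j (1::real))"
proof -
  have basis: "range (\<lambda>j. axis j (1::real)) = Basis" by (auto simp: Basis_vec_def)
  show ?thesis
    unfolding real_onb_def basis by (simp add: inner_axis_axis)
qed

theorem proposition1:
  fixes S :: "complex ^ 'd \<Rightarrow> 'h::{real_inner, complete_space}"
    and g :: "real ^ 2 ^ 2 \<Rightarrow> 'h \<Rightarrow> 'h"
  assumes lin: "\<And>\<phi> \<psi> (a::real) (b::real). S (a *\<^sub>R \<phi> + b *\<^sub>R \<psi>) = a *\<^sub>R S \<phi> + b *\<^sub>R S \<psi>"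
    and rep: "SO2_rep g"
    and equiv: "\<And>\<psi> \<alpha>. S (exp (\<i> * complex_of_real \<alpha>) *s \<psi>) = g (rot \<alpha>) (S \<psi>)"
    and orth0: "\<And>\<phi> \<psi>. braket \<phi> \<psi> = 0 \<Longrightarrow> inner (S \<phi>) (S \<psi>) = 0"
    and orth1: "\<And>\<phi> \<psi>. braket \<phi> \<psi> = 1 \<Longrightarrow> inner (S \<phi>) (S \<psi>) = 1"
    and surj: "surj S"
  shows "\<exists>U :: 'h \<Rightarrow> real ^ 2 ^ 'd. \<exists>e :: 'd \<Rightarrow> complex ^ 'd. \<exists>et :: 'd \<Rightarrow> real ^ 'd.
           hilbert_iso U \<and> complex_onb e \<and> real_onb et \<and>
           (\<forall>c :: 'd \<Rightarrow> complex.
              U (S (\<Sum>j\<in>UNIV. c j *s e j)) =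
              (\<Sum>j\<in>UNIV. Re (c j) *\<^sub>R tprod (et j) flag0 + Im (c j) *\<^sub>R tprod (et j) flag1))"
proof -
  have "linear S"
    by (rule linearI) (use lin[of 1 _ 1] lin[of _ _ 0] in auto)
  then have "orthogonal_transformation S"
    using norm_preserving_if_braket_one_imp_inner_one orth1 by (auto simp: orthogonal_transformation)
  then have "hilbert_iso S"
    using surj by (simp add: hilbert_iso_iff_orthogonal_transformation bij_def
        orthogonal_transformation_inj)
  define U where "U = realify \<circ> inv S"
  have "hilbert_iso U"
    unfolding U_def by (intro hilbert_iso_comp hilbert_iso_inv hilbert_iso_realify \<open>hilbert_iso S\<close>)
  moreover have "U (S (\<Sum>j\<in>UNIV. c j *s axis j 1)) =
      (\<Sum>j\<in>UNIV. Re (c j) *\<^sub>R tprod (axis j 1) flag0 + Im (c j) *\<^sub>R tprod (axis j 1) flag1)" for c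
    using \<open>hilbert_iso S\<close> basis_expansion[of "\<chi> j. c j"]
    by (simp add: U_def hilbert_iso_def bij_is_inj realify_vec_lambda)
  ultimately show ?thesis
    using complex_onb_axis real_onb_axis by blast
qed

end
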